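(* Let $\Bbbk$ be an algebraically closed field of characteristic $2$ and let $\mathfrak{u}(\mathfrak{m})$ be the algebra generated by $a,b,c$ with relations $ab+ba=c$, $ac+ca=a$, $bc+cb=b$, $a^4=b^4=0$, $c^2+c=0$. The elements $e_0=(1+ab+a^2b^2)(1+c)$ and $e_1=(1+a^2b^2)c$ are idempotents of $\mathfrak{u}(\mathfrak{m})$, and $P(V_0)\simeq\mathfrak{u}(\mathfrak{m})e_0$, $P(V_1)\simeq\mathfrak{u}(\mathfrak{m})e_1$ as left $\mathfrak{u}(\mathfrak{m})$-modules.
   Context: $P(V)$ denotes the projective cover of $V$. $V_0$ is the one-dimensional module with $a,b,c$ acting by $0$; $V_1$ is the three-dimensional module with basis $v_1,v_2,v_3$, $av_1=v_2$, $av_2=v_3$, $av_3=0$, $bv_1=0$, $bv_2=v_1$, $bv_3=v_2$, $cv_1=v_1$, $cv_2=0$, $cv_3=v_3$. *)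

theory Defs
  imports "HOL-Computational_Algebra.Polynomial" "HOL-Library.Product_Plus" "HOL-Algebra.QuotRing" "HOL-Algebra.Module"

begin

datatype gen = GA | GB | GC

text \<open>Elements of the free associative algebra over 'k on a,b,c: finitely supported
  functions from words to coefficients; a word [g1,...,gn] is the monomial g1 g2 ... gn.\<close>
type_synonym 'k fw = "gen list \<Rightarrow> 'k"

definition FA :: "('k::field) fw ring" where
  "FA = \<lparr>carrier = {f. finite {w. f w \<noteq> 0}},
         mult = (\<lambda>f g w. \<Sum>i\<le>length w. f (take i w) * g (drop i w)),
         one = (\<lambda>w. if w = [] then 1 else 0),
         zero = (\<lambda>w. 0),
         add = (\<lambda>f g w. f w + g w)\<rparr>"

definition fa_scal :: "'k::field \<Rightarrow> 'k fw" where
  "fa_scal k = (\<lambda>w. if w = [] then k else 0)"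

definition fa_gen :: "gen \<Rightarrow> 'k::field fw" where
  "fa_gen g = (\<lambda>w. if w = [g] then 1 else 0)"

abbreviation "fa_a \<equiv> fa_gen GA"
abbreviation "fa_b \<equiv> fa_gen GB"
abbreviation "fa_c \<equiv> fa_gen GC"

definition um_rels :: "'k::field fw set" where
  "um_rels =
    { fa_a \<otimes>\<^bsub>FA\<^esub> fa_b \<oplus>\<^bsub>FA\<^esub> fa_b \<otimes>\<^bsub>FA\<^esub> fa_a \<oplus>\<^bsub>FA\<^esub> fa_scal (-1) \<otimes>\<^bsub>FA\<^esub> fa_c,
      fa_a \<otimes>\<^bsub>FA\<^esub> fa_c \<oplus>\<^bsub>FA\<^esub> fa_c \<otimes>\<^bsub>FA\<^esub> fa_a \<oplus>\<^bsub>FA\<^esub> fa_scal (-1) \<otimes>\<^bsub>FA\<^esub> fa_a,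
      fa_b \<otimes>\<^bsub>FA\<^esub> fa_c \<oplus>\<^bsub>FA\<^esub> fa_c \<otimes>\<^bsub>FA\<^esub> fa_b \<oplus>\<^bsub>FA\<^esub> fa_scal (-1) \<otimes>\<^bsub>FA\<^esub> fa_b,
      fa_a \<otimes>\<^bsub>FA\<^esub> fa_a \<otimes>\<^bsub>FA\<^esub> fa_a \<otimes>\<^bsub>FA\<^esub> fa_a,
      fa_b \<otimes>\<^bsub>FA\<^esub> fa_b \<otimes>\<^bsub>FA\<^esub> fa_b \<otimes>\<^bsub>FA\<^esub> fa_b,
      fa_c \<otimes>\<^bsub>FA\<^esub> fa_c \<oplus>\<^bsub>FA\<^esub> fa_c }"

definition um_ideal :: "'k::field fw set" where
  "um_ideal = genideal FA um_rels"

definition um :: "('k::field fw) set ring" where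
  "um = FA Quot um_ideal"

definition um_cls :: "'k::field fw \<Rightarrow> 'k fw set" where
  "um_cls f = um_ideal +>\<^bsub>FA\<^esub> f"

definition um_a :: "'k::field fw set" where "um_a = um_cls fa_a"
definition um_b :: "'k::field fw set" where "um_b = um_cls fa_b"
definition um_c :: "'k::field fw set" where "um_c = um_cls fa_c"

definition um_e0 :: "'k::field fw set" where
  "um_e0 = (\<one>\<^bsub>um\<^esub> \<oplus>\<^bsub>um\<^esub> um_a \<otimes>\<^bsub>um\<^esub> um_b
              \<oplus>\<^bsub>um\<^esub> um_a \<otimes>\<^bsub>um\<^esub> um_a \<otimes>\<^bsub>um\<^esub> um_b \<otimes>\<^bsub>um\<^esub> um_b)
           \<otimes>\<^bsub>um\<^esub> (\<one>\<^bsub>um\<^esub> \<oplus>\<^bsub>um\<^esub> um_c)"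

definition um_e1 :: "'k::field fw set" where
  "um_e1 = (\<one>\<^bsub>um\<^esub> \<oplus>\<^bsub>um\<^esub> um_a \<otimes>\<^bsub>um\<^esub> um_a \<otimes>\<^bsub>um\<^esub> um_b \<otimes>\<^bsub>um\<^esub> um_b)
           \<otimes>\<^bsub>um\<^esub> um_c"

definition lmodule :: "('a, 'c) ring_scheme \<Rightarrow> ('a, 'b) module \<Rightarrow> bool" where
  "lmodule R M \<longleftrightarrow> ring R \<and> abelian_group M \<and>
     (\<forall>a\<in>carrier R. \<forall>x\<in>carrier M. a \<odot>\<^bsub>M\<^esub> x \<in> carrier M) \<and>
     (\<forall>a\<in>carrier R. \<forall>b\<in>carrier R. \<forall>x\<in>carrier M.
        (a \<oplus>\<^bsub>R\<^esub> b) \<odot>\<^bsub>M\<^esub> x = a \<odot>\<^bsub>M\<^esub> x \<oplus>\<^bsub>M\<^esub> b \<odot>\<^bsub>M\<^esub> x) \<and>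
     (\<forall>a\<in>carrier R. \<forall>x\<in>carrier M. \<forall>y\<in>carrier M.
        a \<odot>\<^bsub>M\<^esub> (x \<oplus>\<^bsub>M\<^esub> y) = a \<odot>\<^bsub>M\<^esub> x \<oplus>\<^bsub>M\<^esub> a \<odot>\<^bsub>M\<^esub> y) \<and>
     (\<forall>a\<in>carrier R. \<forall>b\<in>carrier R. \<forall>x\<in>carrier M.
        (a \<otimes>\<^bsub>R\<^esub> b) \<odot>\<^bsub>M\<^esub> x = a \<odot>\<^bsub>M\<^esub> (b \<odot>\<^bsub>M\<^esub> x)) \<and>
     (\<forall>x\<in>carrier M. \<one>\<^bsub>R\<^esub> \<odot>\<^bsub>M\<^esub> x = x)"

definition mod_hom :: "('a, 'c) ring_scheme \<Rightarrow> ('a, 'b) module \<Rightarrow> ('a, 'd) module \<Rightarrow> ('b \<Rightarrow> 'd) set" where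
  "mod_hom R M N = {f. f \<in> carrier M \<rightarrow> carrier N \<and>
     (\<forall>x\<in>carrier M. \<forall>y\<in>carrier M. f (x \<oplus>\<^bsub>M\<^esub> y) = f x \<oplus>\<^bsub>N\<^esub> f y) \<and>
     (\<forall>r\<in>carrier R. \<forall>x\<in>carrier M. f (r \<odot>\<^bsub>M\<^esub> x) = r \<odot>\<^bsub>N\<^esub> f x)}"

definition submodule :: "('a, 'c) ring_scheme \<Rightarrow> 'b set \<Rightarrow> ('a, 'b) module \<Rightarrow> bool" where
  "submodule R L M \<longleftrightarrow> L \<subseteq> carrier M \<and> \<zero>\<^bsub>M\<^esub> \<in> L \<and>
     (\<forall>x\<in>L. \<forall>y\<in>L. x \<oplus>\<^bsub>M\<^esub> y \<in> L) \<and> (\<forall>x\<in>L. \<ominus>\<^bsub>M\<^esub> x \<in> L) \<and>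
     (\<forall>r\<in>carrier R. \<forall>x\<in>L. r \<odot>\<^bsub>M\<^esub> x \<in> L)"

text \<open>The
  modules tested against live in an arbitrary type 'n; since the theorem is stated for an
  arbitrary (universally quantified) type 'n, this is projectivity in the usual sense.\<close>
definition projective :: "('a, 'c) ring_scheme \<Rightarrow> ('a, 'b) module \<Rightarrow> 'n itself \<Rightarrow> bool" where
  "projective R P _ \<longleftrightarrow> lmodule R P \<and>
     (\<forall>(N :: ('a, 'n) module) (N' :: ('a, 'n) module) g h.
        lmodule R N \<and> lmodule R N' \<and> g \<in> mod_hom R N N' \<and> g ` carrier N = carrier N' \<and>
        h \<in> mod_hom R P N' \<longrightarrow> (\<exists>f\<in>mod_hom R P N. \<forall>x\<in>carrier P. g (f x) = h x))"

definition essential_epi :: "('a, 'c) ring_scheme \<Rightarrow> ('b \<Rightarrow> 'd) \<Rightarrow> ('a, 'b) module \<Rightarrow> ('a, 'd) module \<Rightarrow> bool" where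
  "essential_epi R \<pi> P V \<longleftrightarrow> \<pi> \<in> mod_hom R P V \<and> \<pi> ` carrier P = carrier V \<and>
     (\<forall>L. submodule R L P \<and>
          {l \<oplus>\<^bsub>P\<^esub> k | l k. l \<in> L \<and> k \<in> carrier P \<and> \<pi> k = \<zero>\<^bsub>V\<^esub>} = carrier P
          \<longrightarrow> L = carrier P)"

text \<open>P is a projective cover of V (so P is isomorphic to P(V)).\<close>
definition projective_cover :: "('a, 'c) ring_scheme \<Rightarrow> ('a, 'b) module \<Rightarrow> ('a, 'd) module \<Rightarrow> 'n itself \<Rightarrow> bool" where
  "projective_cover R P V T \<longleftrightarrow> projective R P T \<and> lmodule R V \<and> (\<exists>\<pi>. essential_epi R \<pi> P V)"

definition left_ideal_mod :: "('a, 'c) ring_scheme \<Rightarrow> 'a \<Rightarrow> ('a, 'a) module" where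
  "left_ideal_mod R e = \<lparr>carrier = {x \<otimes>\<^bsub>R\<^esub> e | x. x \<in> carrier R}, mult = mult R, one = one R,
     zero = zero R, add = add R, smult = mult R\<rparr>"

definition rep_eval :: "('k \<Rightarrow> 'v \<Rightarrow> 'v) \<Rightarrow> (gen \<Rightarrow> 'v \<Rightarrow> 'v) \<Rightarrow> 'k::field fw \<Rightarrow> 'v::ab_group_add \<Rightarrow> 'v" where
  "rep_eval sm \<rho> f v = (\<Sum>w\<in>{w. f w \<noteq> 0}. sm (f w) (foldr \<rho> w v))"

text \<open>The u(m)-module on the k-space V in which the class of f acts as f(a,b,c) evaluated
  at the given operators (independent of the representative since the relations hold).\<close>
definition rep_mod :: "('k \<Rightarrow> 'v \<Rightarrow> 'v) \<Rightarrow> (gen \<Rightarrow> 'v \<Rightarrow> 'v) \<Rightarrow> ('k::field fw set, 'v::ab_group_add) module" where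
  "rep_mod sm \<rho> = \<lparr>carrier = UNIV, mult = (\<lambda>_ _. 0), one = 0, zero = 0, add = (+),
     smult = (\<lambda>x v. rep_eval sm \<rho> (SOME f. f \<in> x) v)\<rparr>"

definition V0 :: "('k::field fw set, 'k) module" where
  "V0 = rep_mod (\<lambda>k x. k * x) (\<lambda>g x. 0)"

text \<open>V1: three-dimensional with basis v1,v2,v3; (x,y,z) = x v1 + y v2 + z v3.
  a v1 = v2, a v2 = v3, a v3 = 0; b v1 = 0, b v2 = v1, b v3 = v2; c v1 = v1, c v2 = 0, c v3 = v3.\<close>
fun V1_act :: "gen \<Rightarrow> 'k::field \<times> 'k \<times> 'k \<Rightarrow> 'k \<times> 'k \<times> 'k" where
  "V1_act GA (x, y, z) = (0, x, y)"
| "V1_act GB (x, y, z) = (y, z, 0)"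
| "V1_act GC (x, y, z) = (x, 0, z)"

definition V1 :: "('k::field fw set, 'k \<times> 'k \<times> 'k) module" where
  "V1 = rep_mod (\<lambda>k (x, y, z). (k * x, k * y, k * z)) V1_act"

end

theory Submission
  imports Defs
begin

(* In characteristic 2 the relations of u(m) read ba = ab + c, ca = ac + a, cb = bc + b, c^2 = c.
   Commuting generators past each other shows that the monomials a^i b^j c^k span u(m), and
   a^4 = b^4 = 0 leaves only i, j < 4 and k < 2.  Computing on these monomials, e0 and e1 are
   idempotent and each corner ring e u(m) e is spanned by e and an element s with s^2 = 0.
   For an idempotent e the left ideal u(m) e is projective, and if e v = v, s v = 0 and
   x |-> x v maps u(m) e onto V, this map is a projective cover: the elements of e u(m) e that
   kill v are the multiples of s, so they square to zero.  Take v = 1 in V0 and v = v1 in V1. *)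

section \<open>Projective covers by left ideals\<close>

lemma lmoduleD:
  assumes "lmodule R M"
  shows "ring R" "abelian_group M"
    "\<And>a x. a \<in> carrier R \<Longrightarrow> x \<in> carrier M \<Longrightarrow> a \<odot>\<^bsub>M\<^esub> x \<in> carrier M"
    "\<And>a b x. a \<in> carrier R \<Longrightarrow> b \<in> carrier R \<Longrightarrow> x \<in> carrier M \<Longrightarrow>
      (a \<oplus>\<^bsub>R\<^esub> b) \<odot>\<^bsub>M\<^esub> x = a \<odot>\<^bsub>M\<^esub> x \<oplus>\<^bsub>M\<^esub> b \<odot>\<^bsub>M\<^esub> x"
    "\<And>a x y. a \<in> carrier R \<Longrightarrow> x \<in> carrier M \<Longrightarrow> y \<in> carrier M \<Longrightarrow>
      a \<odot>\<^bsub>M\<^esub> (x \<oplus>\<^bsub>M\<^esub> y) = a \<odot>\<^bsub>M\<^esub> x \<oplus>\<^bsub>M\<^esub> a \<odot>\<^bsub>M\<^esub> y"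
    "\<And>a b x. a \<in> carrier R \<Longrightarrow> b \<in> carrier R \<Longrightarrow> x \<in> carrier M \<Longrightarrow>
      (a \<otimes>\<^bsub>R\<^esub> b) \<odot>\<^bsub>M\<^esub> x = a \<odot>\<^bsub>M\<^esub> (b \<odot>\<^bsub>M\<^esub> x)"
    "\<And>x. x \<in> carrier M \<Longrightarrow> \<one>\<^bsub>R\<^esub> \<odot>\<^bsub>M\<^esub> x = x"
  using assms unfolding lmodule_def by blast+

lemma lmodule_smult_zero:
  assumes M: "lmodule R M" and a: "a \<in> carrier R"
  shows "a \<odot>\<^bsub>M\<^esub> \<zero>\<^bsub>M\<^esub> = \<zero>\<^bsub>M\<^esub>"
proof -
  interpret abelian_group M
    by (rule lmoduleD(2)[OF M])
  have "a \<odot>\<^bsub>M\<^esub> \<zero>\<^bsub>M\<^esub> \<oplus>\<^bsub>M\<^esub> \<zero>\<^bsub>M\<^esub> = a \<odot>\<^bsub>M\<^esub> \<zero>\<^bsub>M\<^esub> \<oplus>\<^bsub>M\<^esub> a \<odot>\<^bsub>M\<^esub> \<zero>\<^bsub>M\<^esub>"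
    using lmoduleD(3,5)[OF M a] by (metis zero_closed r_zero)
  then show ?thesis
    using lmoduleD(3)[OF M a] by simp
qed

context ring
begin

lemma carrier_left_ideal_mod: "carrier (left_ideal_mod R e) = {x \<otimes> e | x. x \<in> carrier R}"
  and left_ideal_mod_ops [simp]:
    "add (left_ideal_mod R e) = add R" "zero (left_ideal_mod R e) = \<zero>"
    "smult (left_ideal_mod R e) = mult R"
  by (simp_all add: left_ideal_mod_def)

lemma left_ideal_mod_subset: "e \<in> carrier R \<Longrightarrow> carrier (left_ideal_mod R e) \<subseteq> carrier R"
  by (auto simp: carrier_left_ideal_mod)

lemma left_ideal_mod_mult_closed:
  assumes "e \<in> carrier R" "a \<in> carrier R" "x \<in> carrier (left_ideal_mod R e)"
  shows "a \<otimes> x \<in> carrier (left_ideal_mod R e)"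
proof -
  obtain x' where "x' \<in> carrier R" "x = x' \<otimes> e"
    using assms(3) by (auto simp: carrier_left_ideal_mod)
  then show ?thesis
    using assms by (auto simp: carrier_left_ideal_mod m_assoc intro!: exI[of _ "a \<otimes> x'"])
qed

lemma abelian_group_left_ideal_mod:
  assumes e: "e \<in> carrier R"
  shows "abelian_group (left_ideal_mod R e)"
proof (rule abelian_groupI)
  let ?P = "left_ideal_mod R e"
  note sub = subsetD[OF left_ideal_mod_subset[OF e]]
  fix x y z
  assume xyz: "x \<in> carrier ?P" "y \<in> carrier ?P" "z \<in> carrier ?P"
  then obtain x' y' where "x' \<in> carrier R" "y' \<in> carrier R" "x = x' \<otimes> e" "y = y' \<otimes> e"
    by (auto simp: carrier_left_ideal_mod)
  then show "x \<oplus>\<^bsub>?P\<^esub> y \<in> carrier ?P"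
    using e by (auto simp: carrier_left_ideal_mod l_distr intro!: exI[of _ "x' \<oplus> y'"])
  show "x \<oplus>\<^bsub>?P\<^esub> y \<oplus>\<^bsub>?P\<^esub> z = x \<oplus>\<^bsub>?P\<^esub> (y \<oplus>\<^bsub>?P\<^esub> z)" "x \<oplus>\<^bsub>?P\<^esub> y = y \<oplus>\<^bsub>?P\<^esub> x"
    "\<zero>\<^bsub>?P\<^esub> \<oplus>\<^bsub>?P\<^esub> x = x"
    using sub[OF xyz(1)] sub[OF xyz(2)] sub[OF xyz(3)] by (simp_all add: a_ac)
  have "\<ominus> x \<in> carrier ?P"
    using left_ideal_mod_mult_closed[OF e _ xyz(1), of "\<ominus> \<one>"] sub[OF xyz(1)] by (simp add: l_minus)
  then show "\<exists>y\<in>carrier ?P. y \<oplus>\<^bsub>?P\<^esub> x = \<zero>\<^bsub>?P\<^esub>"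
    using sub[OF xyz(1)] l_neg by (intro bexI[of _ "\<ominus> x"]) simp_all
next
  show "\<zero>\<^bsub>left_ideal_mod R e\<^esub> \<in> carrier (left_ideal_mod R e)"
    using e by (auto simp: carrier_left_ideal_mod intro!: exI[of _ \<zero>])
qed

lemma lmodule_left_ideal_mod:
  assumes e: "e \<in> carrier R"
  shows "lmodule R (left_ideal_mod R e)"
  unfolding lmodule_def
  using abelian_group_left_ideal_mod[OF e] left_ideal_mod_mult_closed[OF e]
    subsetD[OF left_ideal_mod_subset[OF e]]
  by (simp add: ring_axioms l_distr r_distr m_assoc)

lemma projective_left_ideal_mod:
  assumes e: "e \<in> carrier R" and idem: "e \<otimes> e = e"
  shows "projective R (left_ideal_mod R e) TYPE('n)"
  unfolding projective_def
proof (intro conjI allI impI)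
  let ?P = "left_ideal_mod R e"
  note sub = subsetD[OF left_ideal_mod_subset[OF e]]
  have e_in: "e \<in> carrier ?P"
    using e by (auto simp: carrier_left_ideal_mod intro!: exI[of _ \<one>])
  have times_e: "x \<otimes> e = x" if "x \<in> carrier ?P" for x
    using that e idem by (auto simp: carrier_left_ideal_mod m_assoc)
  show "lmodule R ?P"
    by (rule lmodule_left_ideal_mod[OF e])
  fix N N' :: "('a, 'n) module" and g h
  assume "lmodule R N \<and> lmodule R N' \<and> g \<in> mod_hom R N N' \<and> g ` carrier N = carrier N' \<and>
    h \<in> mod_hom R ?P N'"
  then have N: "lmodule R N" and g: "g \<in> mod_hom R N N'" "g ` carrier N = carrier N'"
    and h: "h \<in> mod_hom R ?P N'"
    by blast+
  txt \<open>A homomorphism out of R e is determined by the image of e, so it lifts along g as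
    soon as h e does.\<close>
  have "h e \<in> g ` carrier N"
    using h e_in g(2) by (auto simp: mod_hom_def)
  then obtain n where n: "n \<in> carrier N" "g n = h e"
    by auto
  define f where "f x = x \<odot>\<^bsub>N\<^esub> n" for x
  have "f \<in> mod_hom R ?P N"
    using lmoduleD(3,4,6)[OF N] n(1) sub by (simp add: mod_hom_def f_def)
  moreover have "g (f x) = h x" if "x \<in> carrier ?P" for x
  proof -
    have "g (f x) = x \<odot>\<^bsub>N'\<^esub> h e"
      using g(1) n sub[OF that] by (simp add: mod_hom_def f_def)
    also have "\<dots> = h (x \<otimes> e)"
      using h sub[OF that] e_in by (simp add: mod_hom_def)
    finally show ?thesis
      using times_e[OF that] by simp
  qed
  ultimately show "\<exists>f\<in>mod_hom R ?P N. \<forall>x\<in>carrier ?P. g (f x) = h x"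
    by blast
qed

text \<open>With n = e k we have e l + n = e, n e = n and n n = 0, so (e + n)(e l) = e.\<close>
lemma idempotent_mem_left_submodule:
  assumes e: "e \<in> carrier R" "e \<otimes> e = e"
    and L: "L \<subseteq> carrier (left_ideal_mod R e)" "\<And>r x. r \<in> carrier R \<Longrightarrow> x \<in> L \<Longrightarrow> r \<otimes> x \<in> L"
    and lk: "e = l \<oplus> k" "l \<in> L" "k \<in> carrier (left_ideal_mod R e)"
    and square_zero: "(e \<otimes> k) \<otimes> (e \<otimes> k) = \<zero>"
  shows "e \<in> L"
proof -
  note sub = subsetD[OF left_ideal_mod_subset[OF e(1)]]
  have l: "l \<in> carrier R" and k: "k \<in> carrier R"
    using lk(2,3) L(1) sub by blast+
  have "k \<otimes> e = k"
    using lk(3) e by (auto simp: carrier_left_ideal_mod m_assoc)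
  define n where "n = e \<otimes> k"
  have n: "n \<in> carrier R" "n \<otimes> e = n" "n \<otimes> n = \<zero>"
    using e k \<open>k \<otimes> e = k\<close> square_zero by (simp_all add: n_def m_assoc)
  define x where "x = e \<otimes> l"
  have x: "x \<in> carrier R" "x \<oplus> n = e" "e \<otimes> x = x"
    using e l k lk(1) by (simp_all add: x_def n_def r_distr flip: m_assoc)
  have "n \<otimes> x = n"
    using x n r_distr[OF x(1) n(1) n(1)] by simp
  then have "(e \<oplus> n) \<otimes> x = e"
    using e x n by (simp add: l_distr)
  moreover have "(e \<oplus> n) \<otimes> x \<in> L"
    using L(2) e(1) n(1) l lk(2) by (simp add: x_def)
  ultimately show "e \<in> L"
    by simp
qed

lemma essential_epi_left_ideal_mod:
  assumes V: "lmodule R V" and e: "e \<in> carrier R" "e \<otimes> e = e" and v: "v \<in> carrier V"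
    and surj: "(\<lambda>x. x \<odot>\<^bsub>V\<^esub> v) ` carrier (left_ideal_mod R e) = carrier V"
    and square_zero: "\<And>y. y \<in> carrier R \<Longrightarrow> (e \<otimes> y \<otimes> e) \<odot>\<^bsub>V\<^esub> v = \<zero>\<^bsub>V\<^esub> \<Longrightarrow>
      (e \<otimes> y \<otimes> e) \<otimes> (e \<otimes> y \<otimes> e) = \<zero>"
  shows "essential_epi R (\<lambda>x. x \<odot>\<^bsub>V\<^esub> v) (left_ideal_mod R e) V"
  unfolding essential_epi_def
proof (intro conjI allI impI)
  let ?P = "left_ideal_mod R e"
  note sub = subsetD[OF left_ideal_mod_subset[OF e(1)]]
  show "(\<lambda>x. x \<odot>\<^bsub>V\<^esub> v) \<in> mod_hom R ?P V"
    using lmoduleD(3,4,6)[OF V] v sub by (simp add: mod_hom_def)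
  show "(\<lambda>x. x \<odot>\<^bsub>V\<^esub> v) ` carrier ?P = carrier V"
    by (rule surj)
  fix L
  assume "submodule R L ?P \<and>
    {l \<oplus>\<^bsub>?P\<^esub> k | l k. l \<in> L \<and> k \<in> carrier ?P \<and> k \<odot>\<^bsub>V\<^esub> v = \<zero>\<^bsub>V\<^esub>} = carrier ?P"
  then have L: "L \<subseteq> carrier ?P" "\<And>r x. r \<in> carrier R \<Longrightarrow> x \<in> L \<Longrightarrow> r \<otimes> x \<in> L"
    and cover: "{l \<oplus> k | l k. l \<in> L \<and> k \<in> carrier ?P \<and> k \<odot>\<^bsub>V\<^esub> v = \<zero>\<^bsub>V\<^esub>} = carrier ?P"
    unfolding submodule_def by auto
  have "e \<in> carrier ?P"
    using e by (auto simp: carrier_left_ideal_mod intro!: exI[of _ \<one>])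
  then obtain l k where lk: "e = l \<oplus> k" "l \<in> L" "k \<in> carrier ?P" "k \<odot>\<^bsub>V\<^esub> v = \<zero>\<^bsub>V\<^esub>"
    using cover by blast
  have k: "k \<in> carrier R" "k \<otimes> e = k"
    using lk(3) e by (auto simp: carrier_left_ideal_mod m_assoc)
  have "(e \<otimes> k \<otimes> e) \<odot>\<^bsub>V\<^esub> v = \<zero>\<^bsub>V\<^esub>"
    using lmoduleD(6)[OF V e(1) k(1) v] lk(4) lmodule_smult_zero[OF V e(1)] by (simp add: e(1) k m_assoc)
  then have "(e \<otimes> k) \<otimes> (e \<otimes> k) = \<zero>"
    using square_zero[OF k(1)] by (simp add: e(1) k m_assoc)
  then have "e \<in> L"
    using idempotent_mem_left_submodule[OF e L lk(1-3)] by simp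
  then have "carrier ?P \<subseteq> L"
    using L(2) by (auto simp: carrier_left_ideal_mod)
  then show "L = carrier ?P"
    using L(1) by blast
qed

end

section \<open>Computations in a ring satisfying the relations\<close>

locale um_relations =
  fixes a b c :: "'r::{ring, monoid_mult}" and sc :: "'k::field \<Rightarrow> 'r"
  assumes two_eq_zero: "1 + 1 = (0::'r)"
    and ba: "b * a = a * b + c"
    and ca: "c * a = a * c + a"
    and cb: "c * b = b * c + b"
    and cc: "c * c = c"
    and a4: "a * a * a * a = 0"
    and b4: "b * b * b * b = 0"
    and sc_add: "sc (k + l) = sc k + sc l"
    and sc_mult: "sc (k * l) = sc k * sc l"
    and sc_one: "sc 1 = 1"
    and sc_commute: "sc k * x = x * sc k"
begin

lemma add_self: "x + x = (0::'r)"
  by (metis distrib_right mult_1_left two_eq_zero mult_zero_left)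

lemma add_self_left: "x + (x + y) = (y::'r)"
  by (simp add: add_self flip: add.assoc)

lemma sc_zero: "sc 0 = 0"
  using sc_add[of 0 0] by simp

lemma sc_commute_left: "y * (sc k * x) = sc k * (y * x)"
  by (metis sc_commute mult.assoc)

lemma ba': "b * (a * x) = a * (b * x) + c * x"
  by (metis ba distrib_right mult.assoc)

lemma ca': "c * (a * x) = a * (c * x) + a * x"
  by (metis ca distrib_right mult.assoc)

lemma cb': "c * (b * x) = b * (c * x) + b * x"
  by (metis cb distrib_right mult.assoc)

lemma cc': "c * (c * x) = c * x"
  by (metis cc mult.assoc)

lemma a4': "a * (a * (a * (a * x))) = 0"
  by (metis a4 mult.assoc mult_zero_left)

lemma b4': "b * (b * (b * (b * x))) = 0"
  by (metis b4 mult.assoc mult_zero_left)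

text \<open>Oriented as rewrite rules these bring every polynomial in a, b, c to a sorted sum of
  monomials a^i b^j c^k with i, j < 4 and k < 2, a normal form, so simp decides identities.\<close>
lemmas normalize = ba ca cb cc ba' ca' cb' cc' a4' b4' a4[simplified mult.assoc]
  b4[simplified mult.assoc] add_self add_self_left
  mult.assoc distrib_left distrib_right add.assoc add.commute add.left_commute

inductive_set lin_span :: "'r set \<Rightarrow> 'r set" for B :: "'r set" where
  basis: "x \<in> B \<Longrightarrow> x \<in> lin_span B"
| zero: "0 \<in> lin_span B"
| add: "x \<in> lin_span B \<Longrightarrow> y \<in> lin_span B \<Longrightarrow> x + y \<in> lin_span B"
| scale: "x \<in> lin_span B \<Longrightarrow> sc k * x \<in> lin_span B"

lemma lin_span_sandwich:
  assumes "x \<in> lin_span B" and "\<And>x. x \<in> B \<Longrightarrow> p * x * q \<in> lin_span B'"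
  shows "p * x * q \<in> lin_span B'"
  using assms(1)
proof (induction rule: lin_span.induct)
  case (add x y)
  then show ?case
    by (simp add: distrib_left distrib_right lin_span.add)
next
  case (scale x k)
  have "p * (sc k * x) * q = sc k * (p * x * q)"
    by (simp add: sc_commute_left mult.assoc)
  then show ?case
    using scale.IH by (simp add: lin_span.scale)
qed (simp_all add: assms(2) lin_span.zero)

lemma lin_span_pair:
  assumes "x \<in> lin_span {u, v}"
  shows "\<exists>l m. x = sc l * u + sc m * v"
  using assms
proof (induction rule: lin_span.induct)
  case (basis x)
  then show ?case
    by (metis add_0 add_0_right mult_1_left mult_zero_left sc_one sc_zero insertE singletonD)
next
  case zero
  then show ?case
    by (metis add_0 mult_zero_left sc_zero)
next
  case (add x y)
  then obtain l m l' m' where "x = sc l * u + sc m * v" "y = sc l' * u + sc m' * v"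
    by blast
  then have "x + y = sc (l + l') * u + sc (m + m') * v"
    by (simp add: sc_add algebra_simps)
  then show ?case
    by blast
next
  case (scale x k)
  then obtain l m where "x = sc l * u + sc m * v"
    by blast
  then have "sc k * x = sc (k * l) * u + sc (k * m) * v"
    by (simp add: sc_mult distrib_left mult.assoc)
  then show ?case
    by blast
qed

definition pbw_monomials :: "'r set" where
  "pbw_monomials = {a ^ i * b ^ j * c ^ k | i j k. True}"

lemma c_mult_a_power: "c * a ^ i = a ^ i * (c + sc (of_nat i))"
proof (induction i)
  case 0
  then show ?case
    by (simp add: sc_zero)
next
  case (Suc i)
  have "c * a ^ Suc i = c * a ^ i * a"
    by (simp only: power_Suc2 mult.assoc)
  also have "\<dots> = a ^ i * (c * a + sc (of_nat i) * a)"
    by (simp add: Suc mult.assoc distrib_right)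
  also have "c * a + sc (of_nat i) * a = a * (c + sc (of_nat (Suc i)))"
    by (simp add: ca sc_add sc_one sc_commute distrib_left distrib_right add.assoc)
  finally show ?case
    by (simp only: power_Suc2 mult.assoc)
qed

lemma c_mult_b_power: "c * b ^ j = b ^ j * (c + sc (of_nat j))"
proof (induction j)
  case 0
  then show ?case
    by (simp add: sc_zero)
next
  case (Suc j)
  have "c * b ^ Suc j = c * b ^ j * b"
    by (simp only: power_Suc2 mult.assoc)
  also have "\<dots> = b ^ j * (c * b + sc (of_nat j) * b)"
    by (simp add: Suc mult.assoc distrib_right)
  also have "c * b + sc (of_nat j) * b = b * (c + sc (of_nat (Suc j)))"
    by (simp add: cb sc_add sc_one sc_commute distrib_left distrib_right add.assoc)
  finally show ?case
    by (simp only: power_Suc2 mult.assoc)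
qed

lemma pbw_monomial [intro]: "a ^ i * b ^ j * c ^ k \<in> lin_span pbw_monomials"
  by (auto simp: pbw_monomials_def intro: lin_span.basis)

lemma a_mult_pbw: "a * (a ^ i * b ^ j * c ^ k) \<in> lin_span pbw_monomials"
  using pbw_monomial[of "Suc i" j k] by (simp add: mult.assoc)

lemma c_mult_pbw: "c * (a ^ i * b ^ j * c ^ k) \<in> lin_span pbw_monomials"
proof -
  have "c * (a ^ i * b ^ j * c ^ k) = a ^ i * (c * b ^ j + sc (of_nat i) * b ^ j) * c ^ k"
    by (simp add: c_mult_a_power distrib_left distrib_right flip: mult.assoc)
  also have "\<dots> = a ^ i * b ^ j * (c + sc (of_nat (i + j))) * c ^ k"
    by (simp add: c_mult_b_power sc_add sc_commute distrib_left add_ac mult.assoc)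
  also have "\<dots> = a ^ i * b ^ j * c ^ Suc k + sc (of_nat (i + j)) * (a ^ i * b ^ j * c ^ k)"
    by (simp add: distrib_left distrib_right sc_commute_left mult.assoc)
  finally have "c * (a ^ i * b ^ j * c ^ k)
      = a ^ i * b ^ j * c ^ Suc k + sc (of_nat (i + j)) * (a ^ i * b ^ j * c ^ k)" .
  then show ?thesis
    by (metis lin_span.add lin_span.scale pbw_monomial)
qed

lemma lin_span_pbw_mult_left:
  assumes "\<And>i j k. y * (a ^ i * b ^ j * c ^ k) \<in> lin_span pbw_monomials"
    and "x \<in> lin_span pbw_monomials"
  shows "y * x \<in> lin_span pbw_monomials"
  using lin_span_sandwich[OF assms(2), of y 1] assms(1) by (auto simp: pbw_monomials_def)

lemma b_mult_pbw: "b * (a ^ i * b ^ j * c ^ k) \<in> lin_span pbw_monomials"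
proof (induction i)
  case 0
  then show ?case
    using pbw_monomial[of 0 "Suc j" k] by (simp add: mult.assoc)
next
  case (Suc i)
  have "b * (a ^ Suc i * b ^ j * c ^ k)
      = a * (b * (a ^ i * b ^ j * c ^ k)) + c * (a ^ i * b ^ j * c ^ k)"
    by (simp add: ba' mult.assoc)
  then show ?case
    using lin_span_pbw_mult_left[OF a_mult_pbw Suc] c_mult_pbw by (simp add: lin_span.add)
qed

lemma lin_span_pbw_mult_closed:
  assumes "x \<in> lin_span pbw_monomials"
  shows "a * x \<in> lin_span pbw_monomials" "b * x \<in> lin_span pbw_monomials"
    "c * x \<in> lin_span pbw_monomials"
  by (rule lin_span_pbw_mult_left[OF _ assms]; rule a_mult_pbw b_mult_pbw c_mult_pbw)+

lemma a_power_eq_0: "4 \<le> i \<Longrightarrow> a ^ i = 0"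
  by (metis a4 le_add_diff_inverse2 mult_zero_right power4_eq_xxxx power_add)

lemma b_power_eq_0: "4 \<le> j \<Longrightarrow> b ^ j = 0"
  by (metis b4 le_add_diff_inverse2 mult_zero_right power4_eq_xxxx power_add)

lemma c_power_Suc: "c ^ Suc k = c"
  by (induction k) (simp_all add: cc)

lemma pbw_monomial_reduce:
  "a ^ i * b ^ j * c ^ k = 0 \<or>
    (\<exists>i' j' k'. i' < 4 \<and> j' < 4 \<and> k' < 2 \<and> a ^ i * b ^ j * c ^ k = a ^ i' * b ^ j' * c ^ k')"
proof (cases "i < 4 \<and> j < 4")
  case True
  show ?thesis
  proof (cases k)
    case 0
    then show ?thesis
      using True by (intro disjI2 exI[of _ i] exI[of _ j] exI[of _ 0]) simp
  next
    case (Suc k')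
    then have "c ^ k = c ^ 1"
      using c_power_Suc by simp
    then show ?thesis
      using True by (intro disjI2 exI[of _ i] exI[of _ j] exI[of _ 1]) simp
  qed
qed (auto simp: a_power_eq_0 b_power_eq_0)

lemma corner_span:
  assumes small: "\<And>i j k. i < 4 \<Longrightarrow> j < 4 \<Longrightarrow> k < 2 \<Longrightarrow> e * (a ^ i * b ^ j * c ^ k) * e \<in> {0, e, s}"
    and x: "x \<in> lin_span pbw_monomials"
  shows "\<exists>l m. e * x * e = sc l * e + sc m * s"
proof (rule lin_span_pair, rule lin_span_sandwich[OF x])
  fix y assume "y \<in> pbw_monomials"
  then obtain i j k where y: "y = a ^ i * b ^ j * c ^ k"
    by (auto simp: pbw_monomials_def)
  have "e * y * e \<in> {0, e, s}"
    using pbw_monomial_reduce[of i j k]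
  proof
    assume "a ^ i * b ^ j * c ^ k = 0"
    then show ?thesis
      by (simp add: y)
  next
    assume "\<exists>i' j' k'. i' < 4 \<and> j' < 4 \<and> k' < 2 \<and> a ^ i * b ^ j * c ^ k = a ^ i' * b ^ j' * c ^ k'"
    then show ?thesis
      using small y by metis
  qed
  then show "e * y * e \<in> lin_span {e, s}"
    by (auto intro: lin_span.basis lin_span.zero)
qed

definition "e0 = (1 + a * b + a * a * b * b) * (1 + c)"
definition "e1 = (1 + a * a * b * b) * c"

text \<open>Together with e0 and e1, the square-zero elements s0 and s1 span the corner rings
  (corner_e0, corner_e1).\<close>
definition "s0 = a * a * a * b * b * b * (1 + c)"
definition "s1 = (a * b + a * a * b * b + a * a * a * b * b * b) * c"

lemma e0_idem: "e0 * e0 = e0"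
  unfolding e0_def by (simp add: normalize)

lemma e1_idem: "e1 * e1 = e1"
  unfolding e1_def by (simp add: normalize)

lemma s0_square_zero: "s0 * s0 = 0"
  unfolding s0_def by (simp add: normalize)

lemma s1_square_zero: "s1 * s1 = 0"
  unfolding s1_def by (simp add: normalize)

lemma corner_e0: "x \<in> lin_span pbw_monomials \<Longrightarrow> \<exists>l m. e0 * x * e0 = sc l * e0 + sc m * s0"
  by (rule corner_span) (auto simp: less_Suc_eq numeral_eq_Suc normalize e0_def s0_def)

lemma corner_e1: "x \<in> lin_span pbw_monomials \<Longrightarrow> \<exists>l m. e1 * x * e1 = sc l * e1 + sc m * s1"
  by (rule corner_span) (auto simp: less_Suc_eq numeral_eq_Suc normalize e1_def s1_def)

end

section \<open>The free algebra and the quotient u(m)\<close>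

lemma FA_simps:
  "carrier FA = {f. finite {w. f w \<noteq> 0}}"
  "mult FA f g = (\<lambda>w. \<Sum>i\<le>length w. f (take i w) * g (drop i w))"
  "one FA = (\<lambda>w. if w = [] then 1 else 0)"
  "zero FA = (\<lambda>w. 0)"
  "add FA f g = (\<lambda>w. f w + g w)"
  by (simp_all add: FA_def)

lemma convolution_assoc:
  fixes f g h :: "'k::field fw"
  shows "(\<Sum>i\<le>length w. (\<Sum>j\<le>length (take i w). f (take j (take i w)) * g (drop j (take i w))) * h (drop i w))
       = (\<Sum>j\<le>length w. f (take j w) * (\<Sum>k\<le>length (drop j w). g (take k (drop j w)) * h (drop k (drop j w))))"
proof -
  let ?n = "length w"
  define F where "F j k = f (take j w) * g (take k (drop j w)) * h (drop (j + k) w)" for j k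
  have "(\<Sum>i\<le>?n. (\<Sum>j\<le>length (take i w). f (take j (take i w)) * g (drop j (take i w))) * h (drop i w))
      = (\<Sum>i\<le>?n. \<Sum>j\<le>i. F j (i - j))"
    unfolding sum_distrib_right
    by (intro sum.cong refl) (auto simp: F_def min_def take_drop)
  also have "\<dots> = (\<Sum>(j, k) \<in> {(j, k). j + k \<le> ?n}. F j k)"
    by (rule sum.triangle_reindex_eq[symmetric])
  also have "{(j, k). j + k \<le> ?n} = Sigma {..?n} (\<lambda>j. {..?n - j})"
    by auto
  also have "(\<Sum>(j, k) \<in> Sigma {..?n} (\<lambda>j. {..?n - j}). F j k) = (\<Sum>j\<le>?n. \<Sum>k\<le>?n - j. F j k)"
    by (simp add: sum.Sigma)
  also have "\<dots> = (\<Sum>j\<le>?n. f (take j w) * (\<Sum>k\<le>length (drop j w). g (take k (drop j w)) * h (drop k (drop j w))))"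
    unfolding sum_distrib_left
    by (intro sum.cong refl) (auto simp: F_def mult.assoc add.commute)
  finally show ?thesis .
qed

lemma finite_support_convolution:
  fixes f g :: "'k::field fw"
  assumes "finite {w. f w \<noteq> 0}" "finite {w. g w \<noteq> 0}"
  shows "finite {w. (\<Sum>i\<le>length w. f (take i w) * g (drop i w)) \<noteq> 0}"
proof -
  have "{w. (\<Sum>i\<le>length w. f (take i w) * g (drop i w)) \<noteq> 0}
     \<subseteq> (\<lambda>(u, v). u @ v) ` ({w. f w \<noteq> 0} \<times> {w. g w \<noteq> 0})"
  proof
    fix w assume "w \<in> {w. (\<Sum>i\<le>length w. f (take i w) * g (drop i w)) \<noteq> 0}"
    then obtain i where "f (take i w) * g (drop i w) \<noteq> 0"
      by (auto elim: sum.not_neutral_contains_not_neutral)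
    then show "w \<in> (\<lambda>(u, v). u @ v) ` ({w. f w \<noteq> 0} \<times> {w. g w \<noteq> 0})"
      by (auto intro!: image_eqI[of _ _ "(take i w, drop i w)"])
  qed
  then show ?thesis
    by (rule finite_subset) (use assms in auto)
qed

lemma abelian_group_FA: "abelian_group (FA :: 'k::field fw ring)"
proof (rule abelian_groupI)
  fix x y :: "'k fw" assume "x \<in> carrier FA" "y \<in> carrier FA"
  then show "x \<oplus>\<^bsub>FA\<^esub> y \<in> carrier FA"
    by (auto simp: FA_simps intro: finite_subset[of _ "{w. x w \<noteq> 0} \<union> {w. y w \<noteq> 0}"])
next
  fix x :: "'k fw" assume "x \<in> carrier FA"
  then show "\<exists>y\<in>carrier FA. y \<oplus>\<^bsub>FA\<^esub> x = \<zero>\<^bsub>FA\<^esub>"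
    by (intro bexI[of _ "\<lambda>w. - x w"]) (auto simp: FA_simps)
qed (auto simp: FA_simps add.assoc add.commute)

lemma monoid_FA: "monoid (FA :: 'k::field fw ring)"
proof (rule monoidI)
  fix x y :: "'k fw" assume "x \<in> carrier FA" "y \<in> carrier FA"
  then show "x \<otimes>\<^bsub>FA\<^esub> y \<in> carrier FA"
    by (simp add: FA_simps finite_support_convolution)
next
  show "\<one>\<^bsub>FA\<^esub> \<in> carrier (FA :: 'k fw ring)"
    by (auto simp: FA_simps intro: finite_subset[of _ "{[]}"])
next
  fix x y z :: "'k fw"
  show "x \<otimes>\<^bsub>FA\<^esub> y \<otimes>\<^bsub>FA\<^esub> z = x \<otimes>\<^bsub>FA\<^esub> (y \<otimes>\<^bsub>FA\<^esub> z)"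
    by (simp only: FA_simps) (rule ext, rule convolution_assoc)
next
  fix x :: "'k fw"
  have "(\<Sum>i\<le>length w. (if take i w = [] then 1 else 0) * x (drop i w))
      = (\<Sum>i\<le>length w. if i = 0 then x w else 0)" for w
    by (rule sum.cong) (auto simp: take_eq_Nil)
  then show "\<one>\<^bsub>FA\<^esub> \<otimes>\<^bsub>FA\<^esub> x = x"
    by (simp add: FA_simps)
  have "(\<Sum>i\<le>length w. x (take i w) * (if drop i w = [] then 1 else 0))
      = (\<Sum>i\<le>length w. if i = length w then x w else 0)" for w
    by (rule sum.cong) auto
  then show "x \<otimes>\<^bsub>FA\<^esub> \<one>\<^bsub>FA\<^esub> = x"
    by (simp add: FA_simps)
qed

lemma ring_FA: "ring (FA :: 'k::field fw ring)"
proof (rule ringI[OF abelian_group_FA monoid_FA])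
  fix x y z :: "'k fw"
  show "(x \<oplus>\<^bsub>FA\<^esub> y) \<otimes>\<^bsub>FA\<^esub> z = x \<otimes>\<^bsub>FA\<^esub> z \<oplus>\<^bsub>FA\<^esub> y \<otimes>\<^bsub>FA\<^esub> z"
    by (simp add: FA_simps distrib_right sum.distrib)
  show "z \<otimes>\<^bsub>FA\<^esub> (x \<oplus>\<^bsub>FA\<^esub> y) = z \<otimes>\<^bsub>FA\<^esub> x \<oplus>\<^bsub>FA\<^esub> z \<otimes>\<^bsub>FA\<^esub> y"
    by (simp add: FA_simps distrib_left sum.distrib)
qed

interpretation FA: ring "FA :: 'k::field fw ring"
  by (rule ring_FA)

definition fa_word :: "gen list \<Rightarrow> 'k::field fw" where
  "fa_word w = (\<lambda>u. if u = w then 1 else 0)"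

lemma fa_word_closed [simp]: "(fa_word w :: 'k::field fw) \<in> carrier FA"
  unfolding fa_word_def by (auto simp: FA_simps intro: finite_subset[of _ "{w}"])

lemma fa_gen_closed [simp]: "(fa_gen g :: 'k::field fw) \<in> carrier FA"
  unfolding fa_gen_def by (auto simp: FA_simps intro: finite_subset[of _ "{[g]}"])

lemma fa_scal_closed [simp]: "(fa_scal k :: 'k::field fw) \<in> carrier FA"
  unfolding fa_scal_def by (auto simp: FA_simps intro: finite_subset[of _ "{[]}"])

lemma fa_word_Nil: "fa_word [] = \<one>\<^bsub>FA\<^esub>"
  by (simp add: fa_word_def FA_simps)

lemma fa_gen_eq_word: "fa_gen g = fa_word [g]"
  by (simp add: fa_gen_def fa_word_def)

lemma fa_word_append: "fa_word u \<otimes>\<^bsub>FA\<^esub> fa_word v = fa_word (u @ v)"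
proof (rule ext)
  fix w :: "gen list"
  have split_iff: "take i w = u \<and> drop i w = v \<longleftrightarrow> i = length u \<and> w = u @ v" if "i \<le> length w" for i
    using that by (auto simp: min_def)
  have "(fa_word u \<otimes>\<^bsub>FA\<^esub> fa_word v) w = (\<Sum>i\<le>length w. if i = length u \<and> w = u @ v then 1 else 0)"
    unfolding FA_simps fa_word_def by (intro sum.cong refl) (auto simp: split_iff)
  also have "\<dots> = fa_word (u @ v) w"
    by (auto simp: fa_word_def)
  finally show "(fa_word u \<otimes>\<^bsub>FA\<^esub> fa_word v) w = fa_word (u @ v) w" .
qed

lemma fa_scal_mult_left: "fa_scal k \<otimes>\<^bsub>FA\<^esub> f = (\<lambda>w. k * f w)"
proof (rule ext)
  fix w :: "gen list"
  have "(\<Sum>i\<le>length w. fa_scal k (take i w) * f (drop i w)) = (\<Sum>i\<le>length w. if i = 0 then k * f w else 0)"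
    by (rule sum.cong) (auto simp: fa_scal_def take_eq_Nil)
  then show "(fa_scal k \<otimes>\<^bsub>FA\<^esub> f) w = k * f w"
    by (simp add: FA_simps)
qed

lemma fa_scal_mult_right: "f \<otimes>\<^bsub>FA\<^esub> fa_scal k = (\<lambda>w. f w * k)"
proof (rule ext)
  fix w :: "gen list"
  have "(\<Sum>i\<le>length w. f (take i w) * fa_scal k (drop i w)) = (\<Sum>i\<le>length w. if i = length w then f w * k else 0)"
    by (rule sum.cong) (auto simp: fa_scal_def)
  then show "(f \<otimes>\<^bsub>FA\<^esub> fa_scal k) w = f w * k"
    by (simp add: FA_simps)
qed

lemma fa_scal_central: "fa_scal k \<otimes>\<^bsub>FA\<^esub> f = f \<otimes>\<^bsub>FA\<^esub> fa_scal k"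
  by (simp add: fa_scal_mult_left fa_scal_mult_right mult.commute)

lemma fa_scal_add: "fa_scal (k + l) = fa_scal k \<oplus>\<^bsub>FA\<^esub> fa_scal l"
  by (simp add: fa_scal_def FA_simps fun_eq_iff)

lemma fa_scal_mult: "fa_scal (k * l) = fa_scal k \<otimes>\<^bsub>FA\<^esub> fa_scal l"
  by (simp add: fa_scal_mult_left) (simp add: fa_scal_def fun_eq_iff)

lemma fa_scal_one: "fa_scal 1 = \<one>\<^bsub>FA\<^esub>"
  by (simp add: fa_scal_def FA_simps)

lemma fa_scal_zero: "fa_scal 0 = \<zero>\<^bsub>FA\<^esub>"
  by (simp add: fa_scal_def FA_simps fun_eq_iff)

lemma FA_induct [consumes 1, case_names zero add_term]:
  fixes f :: "'k::field fw"
  assumes "f \<in> carrier FA"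
    and zero: "P \<zero>\<^bsub>FA\<^esub>"
    and add_term: "\<And>f k w. f \<in> carrier FA \<Longrightarrow> P f \<Longrightarrow> P (fa_scal k \<otimes>\<^bsub>FA\<^esub> fa_word w \<oplus>\<^bsub>FA\<^esub> f)"
  shows "P f"
proof -
  have "P f" if "finite S" "f \<in> carrier FA" "{w. f w \<noteq> 0} \<subseteq> S" for S and f :: "'k fw"
    using that
  proof (induction S arbitrary: f rule: finite_induct)
    case empty
    then have "f = \<zero>\<^bsub>FA\<^esub>"
      by (auto simp: FA_simps)
    then show ?case
      using zero by simp
  next
    case (insert w S)
    define g where "g = f(w := 0)"
    have g_support: "{w. g w \<noteq> 0} \<subseteq> S"
      using insert.prems(2) by (auto simp: g_def)
    then have "g \<in> carrier FA"
      using insert.hyps(1) by (auto simp: FA_simps intro: finite_subset)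
    moreover have "f = fa_scal (f w) \<otimes>\<^bsub>FA\<^esub> fa_word w \<oplus>\<^bsub>FA\<^esub> g"
      by (simp only: fa_scal_mult_left) (simp add: FA_simps fa_word_def g_def fun_eq_iff)
    ultimately show ?case
      using add_term insert.IH g_support by metis
  qed
  then show ?thesis
    using assms(1) by (auto simp: FA_simps)
qed

lemma um_rels_subset: "(um_rels :: 'k::field fw set) \<subseteq> carrier FA"
  unfolding um_rels_def by simp

lemma ideal_um_ideal: "ideal (um_ideal :: 'k::field fw set) FA"
  unfolding um_ideal_def by (rule FA.genideal_ideal[OF um_rels_subset])

lemma um_rels_subset_ideal: "(um_rels :: 'k::field fw set) \<subseteq> um_ideal"
  unfolding um_ideal_def by (rule FA.genideal_self[OF um_rels_subset])

lemma ring_um: "ring (um :: 'k::field fw set ring)"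
  unfolding um_def by (rule ideal.quotient_is_ring[OF ideal_um_ideal])

lemma um_cls_ring_hom: "(um_cls :: 'k::field fw \<Rightarrow> _) \<in> ring_hom FA um"
proof -
  have "((+>\<^bsub>FA\<^esub>) (um_ideal :: 'k fw set)) \<in> ring_hom FA um"
    unfolding um_def by (rule ideal.rcos_ring_hom[OF ideal_um_ideal])
  moreover have "um_cls = ((+>\<^bsub>FA\<^esub>) (um_ideal :: 'k fw set))"
    by (simp add: um_cls_def fun_eq_iff)
  ultimately show ?thesis
    by simp
qed

lemma carrier_um: "carrier (um :: 'k::field fw set ring) = um_cls ` carrier FA"
  by (auto simp: um_def um_cls_def FactRing_def A_RCOSETS_def')

lemma carrier_umE:
  assumes "x \<in> carrier (um :: 'k::field fw set ring)"
  obtains f where "f \<in> carrier FA" "x = um_cls f"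
  using assms carrier_um by blast

lemma um_cls_ideal: "(f :: 'k::field fw) \<in> um_ideal \<Longrightarrow> um_cls f = \<zero>\<^bsub>um\<^esub>"
  unfolding um_def um_cls_def by (simp add: FactRing_def FA.a_rcos_zero[OF ideal_um_ideal])

text \<open>The carrier of um as a type: its ring structure becomes a type-class instance, so that
  identities in u(m) can be normalised by the simplifier (see um_relations).\<close>
typedef (overloaded) ('k::field) um_type = "carrier (um :: 'k fw set ring)"
  using ring.ring_simprules(2)[OF ring_um] by blast

interpretation UM: ring "um :: 'k::field fw set ring"
  by (rule ring_um)

instantiation um_type :: (field) "{ring, monoid_mult}"
begin

definition "0 = Abs_um_type \<zero>\<^bsub>um\<^esub>"
definition "1 = Abs_um_type \<one>\<^bsub>um\<^esub>"
definition "x + y = Abs_um_type (Rep_um_type x \<oplus>\<^bsub>um\<^esub> Rep_um_type y)"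
definition "x * y = Abs_um_type (Rep_um_type x \<otimes>\<^bsub>um\<^esub> Rep_um_type y)"
definition "- x = Abs_um_type (\<ominus>\<^bsub>um\<^esub> Rep_um_type x)"
definition "x - y = Abs_um_type (Rep_um_type x \<ominus>\<^bsub>um\<^esub> Rep_um_type y)"

lemma Rep_um_type_closed [simp]: "Rep_um_type x \<in> carrier um"
  using Rep_um_type by blast

lemma Rep_um_type_zero: "Rep_um_type 0 = \<zero>\<^bsub>um\<^esub>"
  and Rep_um_type_one: "Rep_um_type 1 = \<one>\<^bsub>um\<^esub>"
  and Rep_um_type_add: "Rep_um_type (x + y) = Rep_um_type x \<oplus>\<^bsub>um\<^esub> Rep_um_type y"
  and Rep_um_type_mult: "Rep_um_type (x * y) = Rep_um_type x \<otimes>\<^bsub>um\<^esub> Rep_um_type y"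
  and Rep_um_type_uminus: "Rep_um_type (- x) = \<ominus>\<^bsub>um\<^esub> Rep_um_type x"
  and Rep_um_type_minus: "Rep_um_type (x - y) = Rep_um_type x \<ominus>\<^bsub>um\<^esub> Rep_um_type y"
  by (simp_all add: zero_um_type_def one_um_type_def plus_um_type_def times_um_type_def
      uminus_um_type_def minus_um_type_def Abs_um_type_inverse)

lemmas Rep_um_type_ops = Rep_um_type_zero Rep_um_type_one Rep_um_type_add Rep_um_type_mult
  Rep_um_type_uminus Rep_um_type_minus

instance
proof
  fix x y z :: "'a um_type"
  show "x + y + z = x + (y + z)"
    by (simp add: Rep_um_type_inject[symmetric] Rep_um_type_ops UM.a_assoc)
  show "x + y = y + x"
    by (simp add: Rep_um_type_inject[symmetric] Rep_um_type_ops UM.a_comm)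
  show "- x + x = 0"
    by (simp add: Rep_um_type_inject[symmetric] Rep_um_type_ops UM.l_neg)
  show "x - y = x + - y"
    by (simp add: Rep_um_type_inject[symmetric] Rep_um_type_ops UM.minus_eq)
  show "x * y * z = x * (y * z)"
    by (simp add: Rep_um_type_inject[symmetric] Rep_um_type_ops UM.m_assoc)
  show "(x + y) * z = x * z + y * z"
    by (simp add: Rep_um_type_inject[symmetric] Rep_um_type_ops UM.l_distr)
  show "x * (y + z) = x * y + x * z"
    by (simp add: Rep_um_type_inject[symmetric] Rep_um_type_ops UM.r_distr)
qed (simp_all add: Rep_um_type_inject[symmetric] Rep_um_type_ops)

end

definition um_class :: "'k::field fw \<Rightarrow> 'k um_type" where
  "um_class f = Abs_um_type (um_cls f)"

definition scal :: "'k::field \<Rightarrow> 'k um_type" where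
  "scal k = um_class (fa_scal k)"

definition gen_of :: "gen \<Rightarrow> 'k::field um_type" where
  "gen_of g = um_class (fa_gen g)"

definition word_of :: "gen list \<Rightarrow> 'k::field um_type" where
  "word_of w = um_class (fa_word w)"

lemma Rep_um_class: "f \<in> carrier FA \<Longrightarrow> Rep_um_type (um_class f) = um_cls f"
  by (simp add: um_class_def Abs_um_type_inverse ring_hom_closed[OF um_cls_ring_hom])

lemma um_class_mult:
  "f \<in> carrier FA \<Longrightarrow> g \<in> carrier FA \<Longrightarrow> um_class (f \<otimes>\<^bsub>FA\<^esub> g) = um_class f * um_class g"
  by (simp add: Rep_um_type_inject[symmetric] Rep_um_type_ops Rep_um_class ring_hom_mult[OF um_cls_ring_hom])

lemma um_class_add:
  "f \<in> carrier FA \<Longrightarrow> g \<in> carrier FA \<Longrightarrow> um_class (f \<oplus>\<^bsub>FA\<^esub> g) = um_class f + um_class g"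
  by (simp add: Rep_um_type_inject[symmetric] Rep_um_type_ops Rep_um_class ring_hom_add[OF um_cls_ring_hom])

lemma um_class_one: "um_class \<one>\<^bsub>FA\<^esub> = 1"
  by (simp add: Rep_um_type_inject[symmetric] Rep_um_type_ops Rep_um_class ring_hom_one[OF um_cls_ring_hom])

lemma um_class_zero: "um_class \<zero>\<^bsub>FA\<^esub> = 0"
  by (simp add: Rep_um_type_inject[symmetric] Rep_um_type_ops Rep_um_class
      ring_hom_zero[OF um_cls_ring_hom ring_FA ring_um])

lemma um_class_surj: "\<exists>f \<in> carrier FA. x = um_class f"
proof -
  obtain f where "f \<in> carrier FA" "Rep_um_type x = um_cls f"
    using Rep_um_type_closed carrier_um by blast
  then show ?thesis
    by (metis Rep_um_type_inverse um_class_def)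
qed

lemma scal_add: "scal (k + l) = scal k + scal l"
  and scal_mult: "scal (k * l) = scal k * scal l"
  and scal_one: "scal 1 = 1"
  and scal_zero: "scal 0 = 0"
  by (simp_all add: scal_def fa_scal_add fa_scal_mult fa_scal_one fa_scal_zero
      um_class_add um_class_mult um_class_one um_class_zero)

lemma scal_commute: "scal k * x = x * scal k"
proof -
  obtain f where "f \<in> carrier FA" "x = um_class f"
    using um_class_surj by blast
  then show ?thesis
    by (simp add: scal_def fa_scal_central flip: um_class_mult)
qed

lemma scal_commute_left: "y * (scal k * x) = scal k * (y * x)"
  by (metis scal_commute mult.assoc)

lemma word_of_Nil: "word_of [] = 1"
  by (simp add: word_of_def fa_word_Nil um_class_one)

lemma word_of_Cons: "word_of (g # w) = gen_of g * word_of w"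
  by (simp add: word_of_def gen_of_def fa_gen_eq_word fa_word_append flip: um_class_mult)

lemma um_type_induct [case_names zero add scaled_word]:
  fixes x :: "'k::field um_type"
  assumes zero: "P 0" and add: "\<And>x y. P x \<Longrightarrow> P y \<Longrightarrow> P (x + y)"
    and scaled_word: "\<And>k w. P (scal k * word_of w)"
  shows "P x"
proof -
  obtain f where "f \<in> carrier FA" "x = um_class f"
    using um_class_surj by blast
  moreover have "P (um_class f)" if "f \<in> carrier FA" for f :: "'k fw"
    using that
  proof (induction rule: FA_induct)
    case zero
    then show ?case
      using assms(1) by (simp add: um_class_zero)
  next
    case (add_term f k w)
    then show ?case
      using add scaled_word by (simp add: um_class_add um_class_mult scal_def word_of_def)
  qed
  ultimately show ?thesis
    by simp
qed

section \<open>Modules given by operators\<close>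

lemma rep_mod_simps [simp]:
  "carrier (rep_mod sm rho) = UNIV" "zero (rep_mod sm rho) = 0" "add (rep_mod sm rho) = (+)"
  by (simp_all add: rep_mod_def)

locale word_rep = vector_space sm
  for sm :: "'k::field \<Rightarrow> 'v::ab_group_add \<Rightarrow> 'v" +
  fixes rho :: "gen \<Rightarrow> 'v \<Rightarrow> 'v"
  assumes linear_rho: "Vector_Spaces.linear sm sm (rho g)"
begin

lemma linear_foldr: "Vector_Spaces.linear sm sm (foldr rho w)"
proof (induction w)
  case Nil
  then show ?case
    by (simp add: linear_ident)
next
  case (Cons g w)
  then show ?case
    using Vector_Spaces.linear_compose[OF Cons.IH linear_rho] by (simp add: comp_def)
qed

lemma foldr_add: "foldr rho w (x + y) = foldr rho w x + foldr rho w y"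
  using linear_foldr[of w] by (simp add: Vector_Spaces.linear_iff)

lemma foldr_scale: "foldr rho w (sm k x) = sm k (foldr rho w x)"
  using linear_foldr[of w] by (simp add: Vector_Spaces.linear_iff)

lemma foldr_zero: "foldr rho w 0 = 0"
  using foldr_scale[of w 0 0] by simp

lemma rep_eval_eq_sum:
  "finite S \<Longrightarrow> {w. f w \<noteq> 0} \<subseteq> S \<Longrightarrow> rep_eval sm rho f v = (\<Sum>w\<in>S. sm (f w) (foldr rho w v))"
  unfolding rep_eval_def by (rule sum.mono_neutral_left) auto

lemma rep_eval_zero: "rep_eval sm rho \<zero>\<^bsub>FA\<^esub> v = 0"
  by (simp add: rep_eval_def FA_simps)

lemma rep_eval_add:
  assumes "f \<in> carrier FA" "g \<in> carrier FA"
  shows "rep_eval sm rho (f \<oplus>\<^bsub>FA\<^esub> g) v = rep_eval sm rho f v + rep_eval sm rho g v"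
proof -
  let ?S = "{w. f w \<noteq> 0} \<union> {w. g w \<noteq> 0}"
  have "finite ?S"
    using assms by (simp add: FA_simps)
  then show ?thesis
    by (subst (1 2 3) rep_eval_eq_sum[of ?S]) (auto simp: FA_simps scale_left_distrib sum.distrib)
qed

lemma rep_eval_scal_mult:
  assumes "f \<in> carrier FA"
  shows "rep_eval sm rho (fa_scal k \<otimes>\<^bsub>FA\<^esub> f) v = sm k (rep_eval sm rho f v)"
proof -
  have "finite {w. f w \<noteq> 0}"
    using assms by (simp add: FA_simps)
  then show ?thesis
    by (subst (1 2) rep_eval_eq_sum[of "{w. f w \<noteq> 0}"])
      (auto simp: fa_scal_mult_left scale_sum_right)
qed

lemma rep_eval_word: "rep_eval sm rho (fa_word w) v = foldr rho w v"
  by (subst rep_eval_eq_sum[of "{w}"]) (auto simp: fa_word_def)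

lemma rep_eval_word_mult:
  assumes "f \<in> carrier FA"
  shows "rep_eval sm rho (fa_word u \<otimes>\<^bsub>FA\<^esub> f) v = foldr rho u (rep_eval sm rho f v)"
  using assms
proof (induction rule: FA_induct)
  case zero
  then show ?case
    by (simp add: rep_eval_zero foldr_zero)
next
  case (add_term f k w)
  have "fa_word u \<otimes>\<^bsub>FA\<^esub> (fa_scal k \<otimes>\<^bsub>FA\<^esub> fa_word w \<oplus>\<^bsub>FA\<^esub> f)
      = fa_scal k \<otimes>\<^bsub>FA\<^esub> fa_word (u @ w) \<oplus>\<^bsub>FA\<^esub> fa_word u \<otimes>\<^bsub>FA\<^esub> f"
    using add_term.hyps by (simp add: FA.r_distr fa_scal_central FA.m_assoc fa_word_append
        flip: FA.m_assoc)
  then show ?case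
    using add_term by (simp add: rep_eval_add rep_eval_scal_mult rep_eval_word foldr_add foldr_scale)
qed

lemma rep_eval_mult:
  assumes "f \<in> carrier FA" "g \<in> carrier FA"
  shows "rep_eval sm rho (f \<otimes>\<^bsub>FA\<^esub> g) v = rep_eval sm rho f (rep_eval sm rho g v)"
  using assms(1)
proof (induction rule: FA_induct)
  case zero
  then show ?case
    using assms(2) by (simp add: rep_eval_zero)
next
  case (add_term f k w)
  then show ?case
    using assms(2) by (simp add: FA.l_distr FA.m_assoc rep_eval_add rep_eval_scal_mult
        rep_eval_word rep_eval_word_mult)
qed

lemma rep_eval_one: "rep_eval sm rho \<one>\<^bsub>FA\<^esub> v = v"
  using rep_eval_word[of "[]" v] by (simp add: fa_word_Nil)

lemma rep_eval_gen: "rep_eval sm rho (fa_gen g) v = rho g v"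
  by (simp add: fa_gen_eq_word rep_eval_word)

lemma rep_eval_scal: "rep_eval sm rho (fa_scal k) v = sm k v"
  using rep_eval_scal_mult[of "\<one>\<^bsub>FA\<^esub>" k v] by (simp add: rep_eval_one)

lemma rep_eval_add_right:
  "rep_eval sm rho f (v + v') = rep_eval sm rho f v + rep_eval sm rho f v'"
  by (simp add: rep_eval_def foldr_add scale_right_distrib sum.distrib)

lemma rep_eval_zero_right: "rep_eval sm rho f 0 = 0"
  by (simp add: rep_eval_def foldr_zero)

definition rep_kernel :: "'k fw set" where
  "rep_kernel = {f \<in> carrier FA. \<forall>v. rep_eval sm rho f v = 0}"

lemma ideal_rep_kernel: "ideal rep_kernel FA"
proof (rule idealI[OF ring_FA])
  show "subgroup rep_kernel (add_monoid FA)"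
  proof (rule FA.add.subgroupI)
    show "rep_kernel \<subseteq> carrier FA" "rep_kernel \<noteq> {}"
      using rep_eval_zero by (auto simp: rep_kernel_def)
  next
    fix f assume f: "f \<in> rep_kernel"
    then have "f \<in> carrier FA"
      by (simp add: rep_kernel_def)
    then have "rep_eval sm rho (\<ominus>\<^bsub>FA\<^esub> f) v = rep_eval sm rho (\<ominus>\<^bsub>FA\<^esub> f \<oplus>\<^bsub>FA\<^esub> f) v" for v
      using f by (simp add: rep_kernel_def rep_eval_add)
    then show "\<ominus>\<^bsub>FA\<^esub> f \<in> rep_kernel"
      using \<open>f \<in> carrier FA\<close> by (simp add: rep_kernel_def FA.l_neg rep_eval_zero)
  qed (simp add: rep_kernel_def rep_eval_add)
qed (simp_all add: rep_kernel_def rep_eval_mult rep_eval_zero_right)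

end

locale um_rep = word_rep sm rho
  for sm :: "'k::field \<Rightarrow> 'v::ab_group_add \<Rightarrow> 'v" and rho +
  assumes relations_vanish: "r \<in> um_rels \<Longrightarrow> rep_eval sm rho r v = 0"
begin

lemma um_ideal_subset_rep_kernel: "um_ideal \<subseteq> rep_kernel"
  unfolding um_ideal_def
  by (rule FA.genideal_minimal[OF ideal_rep_kernel])
    (use um_rels_subset relations_vanish in \<open>auto simp: rep_kernel_def\<close>)

text \<open>The action chooses an arbitrary representative of a class; it differs from f by an
  element of um_ideal, which acts by zero.\<close>
lemma rep_mod_smult_um_cls:
  assumes f: "f \<in> carrier FA"
  shows "um_cls f \<odot>\<^bsub>rep_mod sm rho\<^esub> v = rep_eval sm rho f v"
proof -
  interpret I: ideal um_ideal FA
    by (rule ideal_um_ideal)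
  have "f \<in> um_cls f"
    unfolding um_cls_def using f by (rule I.a_rcos_self)
  then have "(SOME f'. f' \<in> um_cls f) \<in> um_cls f"
    by (rule someI[where P = "\<lambda>f'. f' \<in> um_cls f"])
  then obtain i where i: "i \<in> um_ideal" "(SOME f'. f' \<in> um_cls f) = i \<oplus>\<^bsub>FA\<^esub> f"
    unfolding um_cls_def a_r_coset_def' by blast
  moreover have "i \<in> carrier FA" "rep_eval sm rho i v = 0"
    using i(1) I.a_subset um_ideal_subset_rep_kernel by (auto simp: rep_kernel_def)
  ultimately show ?thesis
    using f by (simp add: rep_mod_def rep_eval_add)
qed

lemma lmodule_rep_mod: "lmodule um (rep_mod sm rho)"
  unfolding lmodule_def
proof (intro conjI ballI)
  show "ring um"
    by (rule ring_um)
  show "abelian_group (rep_mod sm rho)"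
  proof (rule abelian_groupI)
    fix v :: 'v
    show "\<exists>w\<in>carrier (rep_mod sm rho). w \<oplus>\<^bsub>rep_mod sm rho\<^esub> v = \<zero>\<^bsub>rep_mod sm rho\<^esub>"
      by (intro bexI[of _ "- v"]) simp_all
  qed (simp_all add: add.assoc add.commute)
next
  fix x y :: "'k fw set" and v :: 'v
  assume "x \<in> carrier um" "y \<in> carrier um"
  then obtain f g where fg: "f \<in> carrier FA" "g \<in> carrier FA" "x = um_cls f" "y = um_cls g"
    by (metis carrier_umE)
  then show "(x \<oplus>\<^bsub>um\<^esub> y) \<odot>\<^bsub>rep_mod sm rho\<^esub> v
      = x \<odot>\<^bsub>rep_mod sm rho\<^esub> v \<oplus>\<^bsub>rep_mod sm rho\<^esub> y \<odot>\<^bsub>rep_mod sm rho\<^esub> v"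
    by (simp add: rep_mod_smult_um_cls rep_eval_add flip: ring_hom_add[OF um_cls_ring_hom])
  show "(x \<otimes>\<^bsub>um\<^esub> y) \<odot>\<^bsub>rep_mod sm rho\<^esub> v = x \<odot>\<^bsub>rep_mod sm rho\<^esub> (y \<odot>\<^bsub>rep_mod sm rho\<^esub> v)"
    using fg by (simp add: rep_mod_smult_um_cls rep_eval_mult flip: ring_hom_mult[OF um_cls_ring_hom])
next
  fix x :: "'k fw set" and v w :: 'v
  assume "x \<in> carrier um"
  then obtain f where "f \<in> carrier FA" "x = um_cls f"
    by (rule carrier_umE)
  then show "x \<odot>\<^bsub>rep_mod sm rho\<^esub> (v \<oplus>\<^bsub>rep_mod sm rho\<^esub> w)
      = x \<odot>\<^bsub>rep_mod sm rho\<^esub> v \<oplus>\<^bsub>rep_mod sm rho\<^esub> x \<odot>\<^bsub>rep_mod sm rho\<^esub> w"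
    by (simp add: rep_mod_smult_um_cls rep_eval_add_right)
next
  fix v :: 'v
  show "\<one>\<^bsub>um\<^esub> \<odot>\<^bsub>rep_mod sm rho\<^esub> v = v"
    by (simp add: rep_mod_smult_um_cls rep_eval_one flip: ring_hom_one[OF um_cls_ring_hom])
qed simp

definition act :: "'k um_type \<Rightarrow> 'v \<Rightarrow> 'v" where
  "act x v = Rep_um_type x \<odot>\<^bsub>rep_mod sm rho\<^esub> v"

lemma act_um_class: "f \<in> carrier FA \<Longrightarrow> act (um_class f) v = rep_eval sm rho f v"
  by (simp add: act_def Rep_um_class rep_mod_smult_um_cls)

lemma act_mult: "act (x * y) v = act x (act y v)"
  using lmoduleD(6)[OF lmodule_rep_mod] by (simp add: act_def Rep_um_type_mult)

lemma act_add: "act (x + y) v = act x v + act y v"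
  using lmoduleD(4)[OF lmodule_rep_mod] by (simp add: act_def Rep_um_type_add)

lemma act_one: "act 1 v = v"
  by (simp add: act_def Rep_um_type_one lmoduleD(7)[OF lmodule_rep_mod])

lemma act_scal: "act (scal k) v = sm k v"
  by (simp add: scal_def act_um_class rep_eval_scal)

lemma act_gen: "act (gen_of g) v = rho g v"
  by (simp add: gen_of_def act_um_class rep_eval_gen)

lemma corner_kernel_square_zero:
  assumes "e * y * e = scal l * e + scal m * s" and "s * s = 0"
    and "act e v = v" "act s v = 0" "v \<noteq> 0" and "act (e * y * e) v = 0"
  shows "(e * y * e) * (e * y * e) = 0"
proof -
  have "sm l v = 0"
    using assms by (simp add: act_add act_mult act_scal)
  then have "e * y * e = scal m * s"
    using assms(1,5) by (simp add: scal_zero)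
  moreover have "(scal m * s) * (scal m * s) = scal m * (scal m * (s * s))"
    by (simp only: mult.assoc scal_commute_left[of s m s])
  ultimately show ?thesis
    using assms(2) by simp
qed

lemma essential_epi_rep_mod:
  fixes e s :: "'k um_type" and v :: 'v
  assumes corner: "\<And>y. \<exists>l m. e * y * e = scal l * e + scal m * s"
    and idem: "e * e = e" and square_zero: "s * s = 0"
    and acts: "act e v = v" "act s v = 0" "v \<noteq> 0"
    and surj: "\<And>u. \<exists>y. act (y * e) v = u"
  shows "essential_epi um (\<lambda>x. x \<odot>\<^bsub>rep_mod sm rho\<^esub> v) (left_ideal_mod um (Rep_um_type e))
    (rep_mod sm rho)"
proof (rule UM.essential_epi_left_ideal_mod[OF lmodule_rep_mod Rep_um_type_closed])
  show "Rep_um_type e \<otimes>\<^bsub>um\<^esub> Rep_um_type e = Rep_um_type e"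
    using idem by (simp flip: Rep_um_type_mult)
  have "u \<in> (\<lambda>x. x \<odot>\<^bsub>rep_mod sm rho\<^esub> v) ` carrier (left_ideal_mod um (Rep_um_type e))" for u
  proof -
    obtain y where "act (y * e) v = u"
      using surj by blast
    moreover have "Rep_um_type (y * e) \<in> carrier (left_ideal_mod um (Rep_um_type e))"
      unfolding UM.carrier_left_ideal_mod Rep_um_type_mult
      by (intro CollectI exI[of _ "Rep_um_type y"]) simp
    ultimately show ?thesis
      unfolding act_def by blast
  qed
  then show "(\<lambda>x. x \<odot>\<^bsub>rep_mod sm rho\<^esub> v) ` carrier (left_ideal_mod um (Rep_um_type e))
      = carrier (rep_mod sm rho)"
    by auto
  fix y
  assume "y \<in> carrier um"
    and kills: "(Rep_um_type e \<otimes>\<^bsub>um\<^esub> y \<otimes>\<^bsub>um\<^esub> Rep_um_type e) \<odot>\<^bsub>rep_mod sm rho\<^esub> v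
      = \<zero>\<^bsub>rep_mod sm rho\<^esub>"
  obtain y' where y': "y = Rep_um_type y'"
    using \<open>y \<in> carrier um\<close> by (rule Rep_um_type_cases)
  obtain l m where "e * y' * e = scal l * e + scal m * s"
    using corner by blast
  moreover have "act (e * y' * e) v = 0"
    using kills by (simp add: y' act_def Rep_um_type_mult)
  ultimately have "(e * y' * e) * (e * y' * e) = 0"
    using corner_kernel_square_zero square_zero acts by blast
  then show "Rep_um_type e \<otimes>\<^bsub>um\<^esub> y \<otimes>\<^bsub>um\<^esub> Rep_um_type e
      \<otimes>\<^bsub>um\<^esub> (Rep_um_type e \<otimes>\<^bsub>um\<^esub> y \<otimes>\<^bsub>um\<^esub> Rep_um_type e) = \<zero>\<^bsub>um\<^esub>"
    by (simp add: y' flip: Rep_um_type_mult Rep_um_type_zero)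
qed simp

end

lemma (in word_rep) um_rep_intro:
  assumes "\<And>v. rho GA (rho GB v) + rho GB (rho GA v) + sm (-1) (rho GC v) = 0"
    and "\<And>v. rho GA (rho GC v) + rho GC (rho GA v) + sm (-1) (rho GA v) = 0"
    and "\<And>v. rho GB (rho GC v) + rho GC (rho GB v) + sm (-1) (rho GB v) = 0"
    and "\<And>v. rho GA (rho GA (rho GA (rho GA v))) = 0"
    and "\<And>v. rho GB (rho GB (rho GB (rho GB v))) = 0"
    and "\<And>v. rho GC (rho GC v) + rho GC v = 0"
  shows "um_rep sm rho"
proof unfold_locales
  fix r :: "'k fw" and v
  assume "r \<in> um_rels"
  then show "rep_eval sm rho r v = 0"
    unfolding um_rels_def
    by (elim insertE emptyE; simp only: rep_eval_add rep_eval_mult rep_eval_gen rep_eval_scal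
        FA.m_closed FA.a_closed fa_gen_closed fa_scal_closed assms)
qed

section \<open>The modules V0 and V1\<close>

lemma um_class_um_rels: "r \<in> um_rels \<Longrightarrow> um_class r = (0 :: 'k::field um_type)"
  using um_rels_subset_ideal um_cls_ideal by (force simp: um_class_def zero_um_type_def)

locale char_two =
  fixes field_type :: "'k::field itself"
  assumes CHAR_eq_two: "CHAR('k) = 2"
begin

lemma one_add_one_eq_zero: "(1::'k) + 1 = 0"
  by (metis CHAR_eq_two of_nat_CHAR one_add_one of_nat_numeral)

lemma add_self_eq_zero: "(x::'k) + x = 0"
  by (metis one_add_one_eq_zero distrib_right mult_1_left mult_zero_left)

lemma minus_one_eq_one: "- 1 = (1::'k)"
  using one_add_one_eq_zero by (simp add: add_eq_0_iff2 eq_neg_iff_add_eq_0)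

end

lemma add_eq_0_iff_eq_char_two:
  fixes x y :: "'r::{ring, monoid_mult}"
  assumes "1 + 1 = (0::'r)"
  shows "x + y = 0 \<longleftrightarrow> x = y"
proof -
  have "- y = y"
    using assms by (metis add_eq_0_iff2 distrib_right mult_1_left mult_zero_left)
  then show ?thesis
    by (metis add_eq_0_iff2)
qed

sublocale char_two \<subseteq> um_relations "gen_of GA :: 'k um_type" "gen_of GB" "gen_of GC" scal
proof
  let ?a = "gen_of GA :: 'k um_type" and ?b = "gen_of GB :: 'k um_type" and ?c = "gen_of GC :: 'k um_type"
  show two: "1 + 1 = (0 :: 'k um_type)"
    by (metis one_add_one_eq_zero scal_add scal_one scal_zero)
  have "um_class ` um_rels \<subseteq> {0 :: 'k um_type}"
    using um_class_um_rels by blast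
  then have rels: "?a * ?b + ?b * ?a + ?c = 0" "?a * ?c + ?c * ?a + ?a = 0"
    "?b * ?c + ?c * ?b + ?b = 0" "?a * ?a * ?a * ?a = 0" "?b * ?b * ?b * ?b = 0" "?c * ?c + ?c = 0"
    by (simp_all add: um_rels_def um_class_add um_class_mult gen_of_def[symmetric] scal_def[symmetric]
        minus_one_eq_one scal_one)
  note eq = add_eq_0_iff_eq_char_two[OF two, THEN iffD1]
  show "?b * ?a = ?a * ?b + ?c"
    by (rule eq) (use rels(1) in \<open>simp add: add_ac\<close>)
  show "?c * ?a = ?a * ?c + ?a"
    by (rule eq) (use rels(2) in \<open>simp add: add_ac\<close>)
  show "?c * ?b = ?b * ?c + ?b"
    by (rule eq) (use rels(3) in \<open>simp add: add_ac\<close>)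
  show "?c * ?c = ?c"
    using rels(6) by (rule eq)
  show "?a * ?a * ?a * ?a = 0" "?b * ?b * ?b * ?b = 0"
    by (fact rels(4,5))+
qed (rule scal_add scal_mult scal_one scal_commute)+

context char_two
begin

lemma mem_lin_span_pbw: "x \<in> lin_span pbw_monomials"
proof (induction x rule: um_type_induct)
  case zero
  then show ?case
    by (rule lin_span.zero)
next
  case (add x y)
  then show ?case
    by (rule lin_span.add)
next
  case (scaled_word k w)
  have "word_of w \<in> lin_span pbw_monomials"
  proof (induction w)
    case Nil
    then show ?case
      using pbw_monomial[of 0 0 0] by (simp add: word_of_Nil)
  next
    case (Cons g w)
    then show ?case
      by (cases g) (simp_all add: word_of_Cons lin_span_pbw_mult_closed)
  qed
  then show ?case
    by (rule lin_span.scale)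
qed

end

lemma word_rep_V0: "word_rep ((*) :: 'k::field \<Rightarrow> 'k \<Rightarrow> 'k) (\<lambda>_ _. 0)"
  by unfold_locales (simp_all add: algebra_simps Vector_Spaces.linear_iff vector_space_def)

interpretation V0: um_rep "(*) :: 'k::field \<Rightarrow> 'k \<Rightarrow> 'k" "\<lambda>_ _. 0"
  by (rule word_rep.um_rep_intro[OF word_rep_V0]) simp_all

lemma vector_space_V1: "vector_space (\<lambda>(k::'k::field) (x, y, z). (k * x, k * y, k * z))"
  by unfold_locales (simp_all add: split_beta distrib_left distrib_right)

lemma word_rep_V1: "word_rep (\<lambda>(k::'k::field) (x, y, z). (k * x, k * y, k * z)) V1_act"
proof (rule word_rep.intro[OF vector_space_V1], rule word_rep_axioms.intro)
  fix g
  have "V1_act g (v + w) = V1_act g v + V1_act g w"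
    "V1_act g (case v of (x, y, z) \<Rightarrow> (k * x, k * y, k * z))
      = (case V1_act g v of (x, y, z) \<Rightarrow> (k * x, k * y, k * z))" for v w :: "'k \<times> 'k \<times> 'k" and k
    by (cases g; cases v rule: prod_cases3; cases w rule: prod_cases3; simp)+
  then show "Vector_Spaces.linear (\<lambda>(k::'k) (x, y, z). (k * x, k * y, k * z))
      (\<lambda>(k::'k) (x, y, z). (k * x, k * y, k * z)) (V1_act g)"
    by (simp add: Vector_Spaces.linear_iff vector_space_V1)
qed

lemma V1_act_proj:
  "V1_act GA v = (0, fst v, fst (snd v))"
  "V1_act GB v = (fst (snd v), snd (snd v), 0)"
  "V1_act GC v = (fst v, 0, snd (snd v))"
  by (cases v rule: prod_cases3; simp)+

sublocale char_two \<subseteq> V1: um_rep "\<lambda>(k::'k) (x, y, z). (k * x, k * y, k * z)" V1_act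
  by (rule word_rep.um_rep_intro[OF word_rep_V1])
    (simp_all add: V1_act_proj split_beta minus_one_eq_one add_self_eq_zero prod_eq_iff)

context char_two
begin

lemma projective_cover_V0: "projective_cover um (left_ideal_mod um (Rep_um_type e0)) V0 TYPE('n)"
  unfolding projective_cover_def V0_def
proof (intro conjI exI)
  show "projective um (left_ideal_mod um (Rep_um_type e0)) TYPE('n)"
    using e0_idem by (intro UM.projective_left_ideal_mod Rep_um_type_closed) (simp flip: Rep_um_type_mult)
  show "lmodule um (rep_mod (*) (\<lambda>_ _. 0 :: 'k))"
    by (rule V0.lmodule_rep_mod)
  have acts: "V0.act e0 1 = 1" "V0.act s0 1 = 0"
    by (simp_all add: e0_def s0_def V0.act_add V0.act_mult V0.act_one V0.act_gen)
  show "essential_epi um (\<lambda>x. x \<odot>\<^bsub>rep_mod (*) (\<lambda>_ _. 0)\<^esub> (1::'k))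
      (left_ideal_mod um (Rep_um_type e0)) (rep_mod (*) (\<lambda>_ _. 0))"
  proof (rule V0.essential_epi_rep_mod[OF corner_e0[OF mem_lin_span_pbw] e0_idem s0_square_zero acts])
    show "\<exists>y. V0.act (y * e0) 1 = u" for u :: 'k
      using acts by (intro exI[of _ "scal u"]) (simp add: V0.act_mult V0.act_scal)
  qed simp
qed

lemma projective_cover_V1: "projective_cover um (left_ideal_mod um (Rep_um_type e1)) V1 TYPE('n)"
  unfolding projective_cover_def V1_def
proof (intro conjI exI)
  show "projective um (left_ideal_mod um (Rep_um_type e1)) TYPE('n)"
    using e1_idem by (intro UM.projective_left_ideal_mod Rep_um_type_closed) (simp flip: Rep_um_type_mult)
  show "lmodule um (rep_mod (\<lambda>(k::'k) (x, y, z). (k * x, k * y, k * z)) V1_act)"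
    by (rule V1.lmodule_rep_mod)
  have acts: "V1.act e1 (1, 0, 0) = (1, 0, 0)" "V1.act s1 (1, 0, 0) = 0"
    by (simp_all add: e1_def s1_def V1.act_add V1.act_mult V1.act_one V1.act_gen zero_prod_def)
  show "essential_epi um (\<lambda>x. x \<odot>\<^bsub>rep_mod (\<lambda>(k::'k) (x, y, z). (k * x, k * y, k * z)) V1_act\<^esub> (1, 0, 0))
      (left_ideal_mod um (Rep_um_type e1)) (rep_mod (\<lambda>(k::'k) (x, y, z). (k * x, k * y, k * z)) V1_act)"
  proof (rule V1.essential_epi_rep_mod[OF corner_e1[OF mem_lin_span_pbw] e1_idem s1_square_zero acts])
    show "\<exists>y. V1.act (y * e1) (1, 0, 0) = u" for u :: "'k \<times> 'k \<times> 'k"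
    proof (cases u rule: prod_cases3)
      case (fields x y z)
      show ?thesis
        using acts
        by (intro exI[of _ "scal x + scal y * gen_of GA + scal z * (gen_of GA * gen_of GA)"])
          (simp add: V1.act_add V1.act_mult V1.act_scal V1.act_gen mult.assoc fields)
    qed
  qed (simp add: zero_prod_def)
qed

end

theorem lemma3p15:
  assumes "CHAR('k::alg_closed_field) = 2"
  shows "(um_e0 :: 'k fw set) \<in> carrier um \<and> um_e0 \<otimes>\<^bsub>um\<^esub> um_e0 = (um_e0 :: 'k fw set) \<and>
         (um_e1 :: 'k fw set) \<in> carrier um \<and> um_e1 \<otimes>\<^bsub>um\<^esub> um_e1 = (um_e1 :: 'k fw set) \<and>
         projective_cover (um :: 'k fw set ring) (left_ideal_mod um um_e0) V0 TYPE('n) \<and>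
         projective_cover (um :: 'k fw set ring) (left_ideal_mod um um_e1) V1 TYPE('n)"
proof -
  interpret char_two "TYPE('k)"
    by unfold_locales (rule assms)
  have "um_a = Rep_um_type (gen_of GA :: 'k um_type)" "um_b = Rep_um_type (gen_of GB :: 'k um_type)"
    "um_c = Rep_um_type (gen_of GC :: 'k um_type)"
    by (simp_all add: um_a_def um_b_def um_c_def gen_of_def Rep_um_class)
  then have e: "um_e0 = Rep_um_type e0" "um_e1 = Rep_um_type e1"
    by (simp_all add: um_e0_def um_e1_def e0_def e1_def Rep_um_type_ops)
  show ?thesis
    unfolding e using e0_idem e1_idem projective_cover_V0[where 'n = 'n] projective_cover_V1[where 'n = 'n]
    by (simp flip: Rep_um_type_mult)
qed

end
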